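(* Let $\ell\in\mathbb{N}$ and $\alpha_j,\beta_j\in\mathbb{N}$ (positive integers) for $j=1,\dots,\ell$. Then, as formal power series in $t$ and $q$, $$\mathbf{R}^{\alpha_1}\Big[\mathbf{y}^{\beta_1}\mathbf{R}^{\alpha_2}\big[\mathbf{y}^{\beta_2}\cdots\mathbf{R}^{\alpha_\ell}[\mathbf{y}^{\beta_\ell}]\cdots\big]\Big](t)=\sum_{\substack{j_1\ge\beta_1,\dots,j_\ell\ge\beta_\ell\\ k_1\ge\alpha_1,\dots,k_\ell\ge\alpha_\ell}}\prod_{r=1}^\ell\left[\binom{j_r-1}{\beta_r-1}\binom{k_r-1}{\alpha_r-1}q^{k_r\sum_{s=r}^\ell j_s}t^{j_r}\right].$$
   Context: $\mathbf{y}(t)=\frac{t}{1-t}$, and $\mathbf{y}^{\beta}$ denotes multiplication by the series $\mathbf{y}(t)^\beta$. $\mathbf{R}$ is the operator on formal power series $f(t)$ (with coefficients in $\mathbb{Q}[[q]]$ and no constant term in $t$) given by $\mathbf{R}[f](t)=\sum_{k\ge1}f(q^kt)$, and $\mathbf{R}^{n}$ is its $n$-fold composition. *)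

theory Defs
  imports "HOL-Computational_Algebra.Formal_Power_Series" "HOL-Library.FuncSet"
begin

text \<open>Bivariate formal power series: series in t with coefficients in Q[[q]],
  i.e. elements of type rat fps fps. The outer variable is t, the inner one q.\<close>

type_synonym bfps = "rat fps fps"

definition yser :: bfps where
  "yser = Abs_fps (\<lambda>n. if n = 0 then 0 else 1)"

definition qgeom :: "nat \<Rightarrow> rat fps" where
  "qgeom n = Abs_fps (\<lambda>m. if 0 < n \<and> 0 < m \<and> n dvd m then 1 else 0)"

text \<open>R[f](t) = sum over k>=1 of f(q^k t). Coefficientwise: the t^n coefficient
  of f(q^k t) is f_n q^(k n), so the t^n coefficient of R[f] is
  f_n * (sum over k>=1 of q^(k n)). R is only applied to series without constant
  term in t; the t^0 coefficient of R[f] is set to 0.\<close>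
definition Rop :: "bfps \<Rightarrow> bfps" where
  "Rop f = Abs_fps (\<lambda>n. if n = 0 then 0 else fps_nth f n * qgeom n)"

function nestR :: "(nat \<Rightarrow> nat) \<Rightarrow> (nat \<Rightarrow> nat) \<Rightarrow> nat \<Rightarrow> nat \<Rightarrow> bfps" where
  "nestR alpha beta l r =
     (if l < r then 1
      else (Rop ^^ alpha r) (yser ^ beta r * nestR alpha beta l (Suc r)))"
  by pat_completeness auto
termination by (relation "measure (\<lambda>(_, _, l, r). Suc l - r)") auto

end

(*
  Coefficientwise, R^a multiplies the t^n-coefficient of a series by
  (\<Sum>k\<ge>1. q^(k n))^a = \<Sum>k\<ge>a. C(k-1, a-1) q^(k n), and y^b = \<Sum>j\<ge>b. C(j-1, b-1) t^j
  is the case n = 1 of the same series. Hence the coefficients of the nested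
  expression started at level r obey a recursion in r that peels off one pair
  (j_r, k_r). Splitting off the r-th component of the index pairs (j, k) shows
  that the right-hand side, restricted to the levels r..l, obeys the same
  recursion, and induction on l - r finishes the proof.
*)

theory Submission
  imports Defs
begin

unbundle fps_syntax

declare nestR.simps[simp del]

definition geom_fps :: "nat \<Rightarrow> 'a::comm_semiring_1 fps" where
  "geom_fps n = Abs_fps (\<lambda>m. if 0 < n \<and> 0 < m \<and> n dvd m then 1 else 0)"

lemma fps_mult_nth_multiples:
  fixes f g :: "'a::comm_semiring_1 fps"
  assumes n: "0 < n" and supp: "\<And>x. g $ x \<noteq> 0 \<Longrightarrow> n dvd x \<and> 0 < x"
  shows "(f * g) $ m = (\<Sum>b=1..m div n. f $ (m - b * n) * g $ (b * n))"
proof -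
  have "(f * g) $ m = (\<Sum>x=0..m. f $ (m - x) * g $ x)"
    by (subst sum.atLeastAtMost_rev) (simp add: fps_mult_nth)
  also have "\<dots> = (\<Sum>x\<in>(\<lambda>b. b * n) ` {1..m div n}. f $ (m - x) * g $ x)"
  proof (rule sum.mono_neutral_right)
    show "(\<lambda>b. b * n) ` {1..m div n} \<subseteq> {0..m}"
      using n by (auto simp: less_eq_div_iff_mult_less_eq)
    show "\<forall>x\<in>{0..m} - (\<lambda>b. b * n) ` {1..m div n}. f $ (m - x) * g $ x = 0"
    proof
      fix x assume x: "x \<in> {0..m} - (\<lambda>b. b * n) ` {1..m div n}"
      have "g $ x = 0"
      proof (rule ccontr)
        assume "g $ x \<noteq> 0"
        then obtain b where b: "x = b * n" "0 < b"
          using supp[of x] by (auto simp: mult.commute elim: dvdE)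
        then have "b \<in> {1..m div n}"
          using x n by (simp add: less_eq_div_iff_mult_less_eq)
        with x b show False by blast
      qed
      then show "f $ (m - x) * g $ x = 0" by simp
    qed
  qed simp
  also have "\<dots> = (\<Sum>b=1..m div n. f $ (m - b * n) * g $ (b * n))"
    using n by (subst sum.reindex) (auto simp: inj_on_def)
  finally show ?thesis .
qed

lemma sum_choose_lessThan: "(\<Sum>c<M. c choose k) = M choose Suc k"
  by (cases M) (simp_all add: lessThan_Suc_atMost sum_choose_upper)

(* The test 0 < x matters for a = 1, where (0 - 1) choose 0 = 1. *)
lemma geom_fps_power_nth:
  assumes n: "0 < n" and a: "0 < a"
  shows "(geom_fps n ^ a :: 'a::comm_semiring_1 fps) $ x =
    (if n dvd x \<and> 0 < x then of_nat ((x div n - 1) choose (a - 1)) else 0)"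
  using a
proof (induction a arbitrary: x rule: nat_induct_non_zero)
  case 1
  show ?case using n by (simp add: geom_fps_def)
next
  case (Suc a)
  have supp: "geom_fps n $ x \<noteq> 0 \<Longrightarrow> n dvd x \<and> 0 < x" for x :: nat
    by (simp add: geom_fps_def split: if_splits)
  have "(geom_fps n ^ Suc a :: 'a fps) $ x = (geom_fps n ^ a * geom_fps n :: 'a fps) $ x"
    by (simp only: power_Suc2)
  also have "\<dots> = (\<Sum>b=1..x div n. (geom_fps n ^ a :: 'a fps) $ (x - b * n) * geom_fps n $ (b * n))"
    by (rule fps_mult_nth_multiples[OF n supp])
  also have "\<dots> = (\<Sum>b=1..x div n. (geom_fps n ^ a :: 'a fps) $ (x - b * n))"
    using n by (intro sum.cong) (auto simp: geom_fps_def)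
  also have "\<dots> = (if n dvd x \<and> 0 < x then of_nat ((x div n - 1) choose a) else 0)"
  proof (cases "n dvd x \<and> 0 < x")
    case True
    then obtain K where x: "x = K * n"
      by (metis dvdE mult.commute)
    with True have K: "0 < K"
      by simp
    have "(geom_fps n ^ a :: 'a fps) $ (K * n - b * n) = of_nat (if b < K then (K - b - 1) choose (a - 1) else 0)"
      for b
      using n by (simp add: Suc.IH diff_mult_distrib[symmetric])
    then have "(\<Sum>b=1..K. (geom_fps n ^ a :: 'a fps) $ (K * n - b * n)) =
        of_nat (\<Sum>b=1..K. if b < K then (K - b - 1) choose (a - 1) else 0)"
      by (simp add: of_nat_sum)
    also have "(\<Sum>b=1..K. if b < K then (K - b - 1) choose (a - 1) else 0) =
        (\<Sum>b=1..<K. (K - b - 1) choose (a - 1))"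
      by (rule sum.mono_neutral_cong_right) auto
    also have "\<dots> = (\<Sum>c<K - 1. c choose (a - 1))"
      by (rule sum.reindex_bij_witness[where i="\<lambda>c. K - 1 - c" and j="\<lambda>b. K - 1 - b"]) auto
    also have "\<dots> = (K - 1) choose a"
      using Suc.hyps by (simp add: sum_choose_lessThan)
    finally show ?thesis using n x K by simp
  next
    case False
    have "(geom_fps n ^ a :: 'a fps) $ (x - b * n) = 0" if "b \<in> {1..x div n}" for b
      using False that n by (auto simp: Suc.IH less_eq_div_iff_mult_less_eq dest: dvd_diffD)
    then have "(\<Sum>b=1..x div n. (geom_fps n ^ a :: 'a fps) $ (x - b * n)) = 0"
      by (intro sum.neutral ballI)
    with False show ?thesis by auto
  qed
  finally show ?case using Suc.hyps by simp
qed

lemma fps_mult_geom_fps_power_nth: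
  fixes f :: "'a::comm_semiring_1 fps"
  assumes n: "0 < n" and a: "0 < a"
  shows "(f * geom_fps n ^ a) $ m = (\<Sum>b=a..m div n. of_nat ((b - 1) choose (a - 1)) * f $ (m - b * n))"
proof -
  have supp: "(geom_fps n ^ a :: 'a fps) $ x \<noteq> 0 \<Longrightarrow> n dvd x \<and> 0 < x" for x
    by (simp add: geom_fps_power_nth[OF n a] split: if_splits)
  have "(f * geom_fps n ^ a) $ m = (\<Sum>b=1..m div n. f $ (m - b * n) * (geom_fps n ^ a) $ (b * n))"
    by (rule fps_mult_nth_multiples[OF n supp])
  also have "\<dots> = (\<Sum>b=1..m div n. of_nat ((b - 1) choose (a - 1)) * f $ (m - b * n))"
    using n by (intro sum.cong) (simp_all add: geom_fps_power_nth[OF n a] mult.commute)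
  also have "\<dots> = (\<Sum>b=a..m div n. of_nat ((b - 1) choose (a - 1)) * f $ (m - b * n))"
    using a by (intro sum.mono_neutral_right) (auto simp: binomial_eq_0)
  finally show ?thesis .
qed

lemma qgeom_eq_geom_fps: "qgeom = geom_fps"
  by (simp add: fun_eq_iff qgeom_def geom_fps_def)

lemma yser_eq_geom_fps: "yser = geom_fps 1"
  by (rule fps_ext) (simp add: yser_def geom_fps_def)

lemma Rop_funpow_nth:
  "0 < a \<Longrightarrow> (Rop ^^ a) g $ n = (if n = 0 then 0 else g $ n * qgeom n ^ a)"
  by (induction a rule: nat_induct_non_zero) (simp_all add: Rop_def)

lemma nestR_nth_step:
  assumes r: "r \<le> l" and pos: "0 < alpha r" "0 < beta r"
  shows "nestR alpha beta l r $ n $ m =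
    (\<Sum>a=beta r..n. \<Sum>b=alpha r..m div n.
       of_nat ((a - 1) choose (beta r - 1)) * of_nat ((b - 1) choose (alpha r - 1)) *
       nestR alpha beta l (Suc r) $ (n - a) $ (m - b * n))"
proof (cases "n = 0")
  case True
  then show ?thesis using r pos by (subst nestR.simps) (simp add: Rop_funpow_nth)
next
  case False
  define N where "N = nestR alpha beta l (Suc r)"
  define P where "P = (\<Sum>a=beta r..n. of_nat ((a - 1) choose (beta r - 1)) * N $ (n - a))"
  have "(yser ^ beta r * N) $ n = P"
    using fps_mult_geom_fps_power_nth[of 1 "beta r" N n] pos
    by (simp add: P_def yser_eq_geom_fps mult.commute)
  then have "nestR alpha beta l r $ n $ m = (P * geom_fps n ^ alpha r) $ m"
    using r pos False by (subst nestR.simps) (simp add: Rop_funpow_nth N_def qgeom_eq_geom_fps)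
  also have "\<dots> = (\<Sum>b=alpha r..m div n. of_nat ((b - 1) choose (alpha r - 1)) * P $ (m - b * n))"
    using False pos by (simp add: fps_mult_geom_fps_power_nth)
  also have "\<dots> = (\<Sum>a=beta r..n. \<Sum>b=alpha r..m div n.
       of_nat ((a - 1) choose (beta r - 1)) * of_nat ((b - 1) choose (alpha r - 1)) * N $ (n - a) $ (m - b * n))"
    by (subst sum.swap) (simp add: P_def fps_sum_nth sum_distrib_left fps_of_nat algebra_simps)
  finally show ?thesis by (simp add: N_def)
qed

definition nest_indices ::
  "(nat \<Rightarrow> nat) \<Rightarrow> (nat \<Rightarrow> nat) \<Rightarrow> nat \<Rightarrow> nat \<Rightarrow> nat \<Rightarrow> nat \<Rightarrow> ((nat \<Rightarrow> nat) \<times> (nat \<Rightarrow> nat)) set"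
where
  "nest_indices alpha beta l r n m =
     {(j, k). j \<in> {r..l} \<rightarrow>\<^sub>E (UNIV :: nat set) \<and> k \<in> {r..l} \<rightarrow>\<^sub>E (UNIV :: nat set)
        \<and> (\<forall>i\<in>{r..l}. beta i \<le> j i \<and> alpha i \<le> k i)
        \<and> (\<Sum>i=r..l. j i) = n
        \<and> (\<Sum>i=r..l. k i * (\<Sum>s=i..l. j s)) = m}"

definition nest_weight ::
  "(nat \<Rightarrow> nat) \<Rightarrow> (nat \<Rightarrow> nat) \<Rightarrow> nat \<Rightarrow> nat \<Rightarrow> (nat \<Rightarrow> nat) \<times> (nat \<Rightarrow> nat) \<Rightarrow> rat"
where
  "nest_weight alpha beta l r = (\<lambda>(j, k). \<Prod>i=r..l.
     of_nat ((j i - 1) choose (beta i - 1)) * of_nat ((k i - 1) choose (alpha i - 1)))"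

definition nest_sum :: "(nat \<Rightarrow> nat) \<Rightarrow> (nat \<Rightarrow> nat) \<Rightarrow> nat \<Rightarrow> nat \<Rightarrow> nat \<Rightarrow> nat \<Rightarrow> rat" where
  "nest_sum alpha beta l r n m = sum (nest_weight alpha beta l r) (nest_indices alpha beta l r n m)"

lemma finite_nest_indices:
  assumes pos: "\<forall>i\<in>{r..l}. 0 < beta i"
  shows "finite (nest_indices alpha beta l r n m)"
proof (rule finite_subset)
  show "nest_indices alpha beta l r n m \<subseteq> ({r..l} \<rightarrow>\<^sub>E {..n}) \<times> ({r..l} \<rightarrow>\<^sub>E {..m})"
  proof
    fix jk assume "jk \<in> nest_indices alpha beta l r n m"
    then obtain j k where jk_eq: "jk = (j, k)"
      and ext: "j \<in> {r..l} \<rightarrow>\<^sub>E UNIV" "k \<in> {r..l} \<rightarrow>\<^sub>E UNIV"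
      and lower: "\<forall>i\<in>{r..l}. beta i \<le> j i"
      and n: "(\<Sum>i=r..l. j i) = n" and m: "(\<Sum>i=r..l. k i * (\<Sum>s=i..l. j s)) = m"
      by (auto simp: nest_indices_def)
    have "j i \<le> n" if i: "i \<in> {r..l}" for i
      using member_le_sum[of i "{r..l}" j] i n by simp
    then have "j \<in> {r..l} \<rightarrow>\<^sub>E {..n}"
      using ext by (simp add: PiE_iff)
    moreover have "k i \<le> m" if i: "i \<in> {r..l}" for i
    proof -
      have "0 < beta i"
        using pos i by simp
      also have "beta i \<le> (\<Sum>s=i..l. j s)"
        using lower i member_le_sum[of i "{i..l}" j] by fastforce
      finally have "k i \<le> k i * (\<Sum>s=i..l. j s)"
        by simp
      also have "\<dots> \<le> m"
        using i m member_le_sum[of i "{r..l}" "\<lambda>i. k i * (\<Sum>s=i..l. j s)"] by simp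
      finally show ?thesis .
    qed
    then have "k \<in> {r..l} \<rightarrow>\<^sub>E {..m}"
      using ext by (simp add: PiE_iff)
    ultimately show "jk \<in> ({r..l} \<rightarrow>\<^sub>E {..n}) \<times> ({r..l} \<rightarrow>\<^sub>E {..m})"
      by (simp add: jk_eq)
  qed
qed (simp add: finite_PiE)

lemma nest_sums_split:
  assumes "r \<le> l"
  shows "(\<Sum>i=r..l. j i) = j r + (\<Sum>i=Suc r..l. j i)"
    and "(\<Sum>i=r..l. k i * (\<Sum>s=i..l. j s)) =
      k r * (\<Sum>i=r..l. j i) + (\<Sum>i=Suc r..l. k i * (\<Sum>s=i..l. j s))"
  using assms by (simp_all add: sum.atLeast_Suc_atMost)

lemma nest_sums_fun_upd:
  "(\<Sum>i=Suc r..l. (j(r := a)) i) = (\<Sum>i=Suc r..l. j i)"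
  "(\<Sum>i=Suc r..l. (k(r := b)) i * (\<Sum>s=i..l. (j(r := a)) s)) = (\<Sum>i=Suc r..l. k i * (\<Sum>s=i..l. j s))"
  by (auto intro!: sum.cong)

lemma nest_indices_undefined:
  "(j, k) \<in> nest_indices alpha beta l (Suc r) n m \<Longrightarrow> j r = undefined \<and> k r = undefined"
  by (simp add: nest_indices_def PiE_def extensional_def)

lemma nest_indices_restrict:
  assumes r: "r \<le> l" and pos: "0 < beta r" and jk: "(j, k) \<in> nest_indices alpha beta l r n m"
  shows "(j(r := undefined), k(r := undefined)) \<in> nest_indices alpha beta l (Suc r) (n - j r) (m - k r * n)"
    and "j r \<in> {beta r..n}" and "k r \<in> {alpha r..m div n}"
proof -
  have n: "n = j r + (\<Sum>i=Suc r..l. j i)" and m: "m = k r * n + (\<Sum>i=Suc r..l. k i * (\<Sum>s=i..l. j s))"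
    using jk nest_sums_split(1)[OF r, of j] nest_sums_split(2)[OF r, of k j] by (auto simp: nest_indices_def)
  have "j(r := undefined) \<in> {Suc r..l} \<rightarrow>\<^sub>E UNIV" "k(r := undefined) \<in> {Suc r..l} \<rightarrow>\<^sub>E UNIV"
    using jk by (auto simp: nest_indices_def PiE_def extensional_def)
  with jk n m show "(j(r := undefined), k(r := undefined)) \<in> nest_indices alpha beta l (Suc r) (n - j r) (m - k r * n)"
    unfolding nest_indices_def by (simp add: nest_sums_fun_upd del: fun_upd_apply) simp
  show jr: "j r \<in> {beta r..n}"
    using jk r n by (auto simp: nest_indices_def)
  have "k r * n \<le> m" and "0 < n"
    using m jr pos by (linarith, simp)
  then show "k r \<in> {alpha r..m div n}"
    using jk r by (auto simp: nest_indices_def less_eq_div_iff_mult_less_eq)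
qed

lemma nest_indices_extend:
  assumes r: "r \<le> l" and jk: "(j, k) \<in> nest_indices alpha beta l (Suc r) (n - a) (m - b * n)"
    and a: "a \<in> {beta r..n}" and b: "b \<in> {alpha r..m div n}"
  shows "(j(r := a), k(r := b)) \<in> nest_indices alpha beta l r n m"
proof -
  have "b * n \<le> m div n * n"
    using b by simp
  also have "\<dots> \<le> m"
    by (rule div_times_less_eq_dividend)
  finally have bn: "b * n \<le> m" .
  have n: "(\<Sum>i=r..l. (j(r := a)) i) = n"
    using jk a nest_sums_split(1)[OF r, of "j(r := a)"]
    by (simp add: nest_indices_def nest_sums_fun_upd del: fun_upd_apply) simp
  have "(\<Sum>i=r..l. (k(r := b)) i * (\<Sum>s=i..l. (j(r := a)) s)) = m"
    using jk bn nest_sums_split(2)[OF r, of "k(r := b)" "j(r := a)"]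
    by (simp add: n nest_indices_def nest_sums_fun_upd del: fun_upd_apply) simp
  moreover have "j(r := a) \<in> {r..l} \<rightarrow>\<^sub>E UNIV" "k(r := b) \<in> {r..l} \<rightarrow>\<^sub>E UNIV"
    using jk r by (auto simp: nest_indices_def PiE_def extensional_def)
  moreover have "\<forall>i\<in>{r..l}. beta i \<le> (j(r := a)) i \<and> alpha i \<le> (k(r := b)) i"
    using jk a b by (auto simp: nest_indices_def)
  ultimately show ?thesis
    using n by (simp add: nest_indices_def)
qed

lemma nest_weight_split:
  assumes "r \<le> l"
  shows "nest_weight alpha beta l r (j, k) =
    of_nat ((j r - 1) choose (beta r - 1)) * of_nat ((k r - 1) choose (alpha r - 1)) *
    nest_weight alpha beta l (Suc r) (j(r := a), k(r := b))"
proof -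
  have "nest_weight alpha beta l (Suc r) (j(r := a), k(r := b)) = nest_weight alpha beta l (Suc r) (j, k)"
    by (auto simp: nest_weight_def intro!: prod.cong)
  with assms show ?thesis
    by (simp add: nest_weight_def prod.atLeast_Suc_atMost)
qed

lemma bij_betw_nest_indices_restrict:
  assumes r: "r \<le> l" and pos: "0 < beta r"
  shows "bij_betw (\<lambda>(j, k). ((j r, k r), (j(r := undefined), k(r := undefined))))
    (nest_indices alpha beta l r n m)
    (SIGMA ab:{beta r..n} \<times> {alpha r..m div n}. nest_indices alpha beta l (Suc r) (n - fst ab) (m - snd ab * n))"
  (is "bij_betw ?restrict ?S ?T")
proof (rule bij_betw_byWitness[where f' = "\<lambda>((a, b), (j, k)). (j(r := a), k(r := b))"])
  show "\<forall>jk\<in>?S. (\<lambda>((a, b), (j, k)). (j(r := a), k(r := b))) (?restrict jk) = jk"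
    by auto
  show "\<forall>y\<in>?T. ?restrict ((\<lambda>((a, b), (j, k)). (j(r := a), k(r := b))) y) = y"
    by (auto simp: fun_upd_idem dest: nest_indices_undefined)
  show "?restrict ` ?S \<subseteq> ?T"
    using nest_indices_restrict[where beta = beta, OF r pos] by auto
  show "(\<lambda>((a, b), (j, k)). (j(r := a), k(r := b))) ` ?T \<subseteq> ?S"
    using nest_indices_extend[OF r] by auto
qed

lemma nest_sum_step:
  assumes r: "r \<le> l" and pos: "\<forall>i\<in>{r..l}. 0 < beta i"
  shows "nest_sum alpha beta l r n m =
    (\<Sum>a=beta r..n. \<Sum>b=alpha r..m div n.
       of_nat ((a - 1) choose (beta r - 1)) * of_nat ((b - 1) choose (alpha r - 1)) *
       nest_sum alpha beta l (Suc r) (n - a) (m - b * n))"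
proof -
  define c :: "nat \<times> nat \<Rightarrow> rat"
    where "c = (\<lambda>(a, b). of_nat ((a - 1) choose (beta r - 1)) * of_nat ((b - 1) choose (alpha r - 1)))"
  define g where "g = (\<lambda>(ab, jk). c ab * nest_weight alpha beta l (Suc r) jk)"
  have "nest_sum alpha beta l r n m =
      (\<Sum>jk\<in>nest_indices alpha beta l r n m. g ((\<lambda>(j, k). ((j r, k r), (j(r := undefined), k(r := undefined)))) jk))"
    unfolding nest_sum_def using nest_weight_split[OF r] by (intro sum.cong) (auto simp: g_def c_def)
  also have "\<dots> = (\<Sum>ab\<in>{beta r..n} \<times> {alpha r..m div n}.
      \<Sum>jk\<in>nest_indices alpha beta l (Suc r) (n - fst ab) (m - snd ab * n). g (ab, jk))"
    using pos r finite_nest_indices[of "Suc r" l beta]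
    by (subst sum.reindex_bij_betw[OF bij_betw_nest_indices_restrict[OF r]]) (simp_all add: sum.Sigma)
  also have "\<dots> = (\<Sum>a=beta r..n. \<Sum>b=alpha r..m div n. c (a, b) * nest_sum alpha beta l (Suc r) (n - a) (m - b * n))"
    by (simp add: g_def sum.cartesian_product nest_sum_def sum_distrib_left split_def)
  finally show ?thesis by (simp add: c_def)
qed

lemma nestR_nth_eq_nest_sum:
  assumes "\<forall>i\<in>{r..l}. 0 < alpha i \<and> 0 < beta i" and "r \<le> Suc l"
  shows "nestR alpha beta l r $ n $ m = nest_sum alpha beta l r n m"
  using assms
proof (induction "Suc l - r" arbitrary: r n m)
  case 0
  then have r: "r = Suc l" by simp
  have "nestR alpha beta l r = 1"
    by (subst nestR.simps) (simp add: r)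
  moreover have "nest_indices alpha beta l r n m =
      (if n = 0 \<and> m = 0 then {(\<lambda>_. undefined, \<lambda>_. undefined)} else {})"
    by (auto simp: nest_indices_def r)
  ultimately show ?case
    by (simp add: nest_sum_def nest_weight_def r)
next
  case (Suc d)
  then have r: "r \<le> l" and pos: "0 < alpha r" "0 < beta r" by auto
  have IH: "nestR alpha beta l (Suc r) $ n' $ m' = nest_sum alpha beta l (Suc r) n' m'" for n' m'
    using Suc by auto
  have "\<forall>i\<in>{r..l}. 0 < beta i"
    using Suc.prems by simp
  then show ?case
    by (simp add: nestR_nth_step[where alpha = alpha and beta = beta, OF r pos] nest_sum_step[OF r] IH)
qed

theorem theorem3p3:
  fixes l :: nat and alpha beta :: "nat \<Rightarrow> nat"
  assumes "1 \<le> l"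
    and "\<forall>r\<in>{1..l}. 0 < alpha r \<and> 0 < beta r"
  shows "\<forall>n m. fps_nth (fps_nth (nestR alpha beta l 1) n) m =
     (\<Sum>(j, k) \<in> {(j, k). j \<in> {1..l} \<rightarrow>\<^sub>E (UNIV :: nat set) \<and> k \<in> {1..l} \<rightarrow>\<^sub>E (UNIV :: nat set)
                     \<and> (\<forall>r\<in>{1..l}. beta r \<le> j r \<and> alpha r \<le> k r)
                     \<and> (\<Sum>r=1..l. j r) = n
                     \<and> (\<Sum>r=1..l. k r * (\<Sum>s=r..l. j s)) = m}.
        (\<Prod>r=1..l. of_nat ((j r - 1) choose (beta r - 1)) *
                     of_nat ((k r - 1) choose (alpha r - 1)) :: rat))"
proof -
  have "nestR alpha beta l 1 $ n $ m = nest_sum alpha beta l 1 n m" for n m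
    using assms by (intro nestR_nth_eq_nest_sum) auto
  then show ?thesis
    unfolding nest_sum_def nest_indices_def nest_weight_def by blast
qed

end
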